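(* Let $0\le\alpha<1$. The radius of starlikeness of order $\alpha$ of the class of analytic functions $f(z)=z+\sum_{n\ge2}a_nz^n$ on $\mathbb{D}$ with $|a_n|\le n$ for all $n\ge2$ is the real root in $(0,1)$ of the equation \[2(1-\alpha)(1-r)^3=1-\alpha+(1+\alpha)r.\] In particular, the radius of starlikeness of this class is \[r_0(0)=1+\frac{1}{6^{2/3}}\left((\sqrt{330}-18)^{1/3}-(\sqrt{330}+18)^{1/3}\right)\approx0.164878,\] and the radius of starlikeness of order $1/2$, which equals the radius of parabolic starlikeness of the class, is \[r_0(1/2)=1+\frac{1}{\sqrt2}\left((3-2\sqrt2)^{1/3}-(3+2\sqrt2)^{1/3}\right)\approx0.120385.\] These results are sharp.
   Context: $\mathbb{D}=\{z\in\mathbb{C}:|z|<1\}$. For a class $\mathcal{F}$ of analytic functions on $\mathbb{D}$ normalized by $f(0)=0$, $f'(0)=1$, and $0\le\alpha<1$, the radius of starlikeness of order $\alpha$ of $\mathcal{F}$ is the supremum of $r\in(0,1]$ such that every $f\in\mathcal{F}$ satisfies $f(z)\ne0$ for $0<|z|<r$ and $\operatorname{Re}\big(zf'(z)/f(z)\big)>\alpha$ for $|z|<r$ (the quotient being $1$ at $z=0$); the radius of starlikeness means the case $\alpha=0$. The radius of parabolic starlikeness of $\mathcal{F}$ is the supremum of $r\in(0,1]$ such that every $f\in\mathcal{F}$ satisfies $\operatorname{Re}\big(zf'(z)/f(z)\big)>\left|zf'(z)/f(z)-1\right|$ for $|z|<r$. *)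

theory Defs
  imports "HOL-Analysis.Analysis"
begin

definition coeff_class :: "(complex \<Rightarrow> complex) set" where
  "coeff_class = {f. f holomorphic_on ball 0 1 \<and> f 0 = 0 \<and> deriv f 0 = 1 \<and>
      (\<forall>n\<ge>2. cmod ((deriv ^^ n) f 0 / of_nat (fact n)) \<le> real n)}"

definition starq :: "(complex \<Rightarrow> complex) \<Rightarrow> complex \<Rightarrow> complex" where
  "starq f z = (if z = 0 then 1 else z * deriv f z / f z)"

definition radius_starlike_order :: "(complex \<Rightarrow> complex) set \<Rightarrow> real \<Rightarrow> real" where
  "radius_starlike_order F \<alpha> = Sup {r. 0 < r \<and> r \<le> 1 \<and> (\<forall>f\<in>F.
      (\<forall>z. 0 < cmod z \<and> cmod z < r \<longrightarrow> f z \<noteq> 0) \<and>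
      (\<forall>z. cmod z < r \<longrightarrow> Re (starq f z) > \<alpha>))}"

definition radius_parabolic :: "(complex \<Rightarrow> complex) set \<Rightarrow> real" where
  "radius_parabolic F = Sup {r. 0 < r \<and> r \<le> 1 \<and> (\<forall>f\<in>F.
      \<forall>z. cmod z < r \<longrightarrow> Re (starq f z) > cmod (starq f z - 1))}"

end

theory Submission
  imports Defs "HOL-Complex_Analysis.Complex_Analysis"
begin

text \<open>Write f(z) = z (1 + A) and f'(z) = 1 + A + B with A = \<Sum> a(n+2) z^(n+1) and
  B = \<Sum> (n+1) a(n+2) z^(n+1). On |z| = r the bound |a(n)| \<le> n dominates A and B by the
  derivatives of the geometric series: |A| \<le> 1/(1-r)^2 - 1 and |B| \<le> 2r/(1-r)^3. Hence
  |z f'/f - 1| = |B|/|1+A| \<le> 2r/((1-r)(2(1-r)^2 - 1)), which stays below 1 - \<alpha> exactly while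
  2(1-\<alpha>)(1-r)^3 > 1 - \<alpha> + (1+\<alpha>) r. The function z - \<Sum>(n\<ge>2) n z^n = 2z - z/(1-z)^2
  attains every coefficient bound with the worst sign; on the positive axis its z f'/f is real
  and reaches \<alpha> at the root, so the radius is sharp. Since |w - 1| < 1/2 forces
  Re w > 1/2 > |w - 1|, the same estimate and the same function give the parabolic radius.
  The closed forms are Cardano's formula for the two cubics.\<close>

lemma sums_shifted_geometric_deriv:
  fixes z :: "'a::{real_normed_field,banach}"
  assumes "norm z < 1"
  shows "(\<lambda>n. of_nat (n + 2) * z ^ (n + 1)) sums (1 / (1 - z)^2 - 1)"
proof -
  have "(\<lambda>n. of_nat (Suc n) * z ^ n) sums (1 / (1 - z)^2)"
    by (rule geometric_deriv_sums[OF assms])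
  then have "(\<lambda>n. of_nat (Suc (Suc n)) * z ^ Suc n) sums (1 / (1 - z)^2 - 1)"
    by (subst sums_Suc_iff) simp
  then show ?thesis
    by (simp add: add.commute)
qed

lemma geometric_second_deriv_sums:
  fixes z :: "'a::{real_normed_field,banach}"
  assumes "norm z < 1"
  shows "(\<lambda>n. of_nat ((n + 1) * (n + 2)) * z ^ n) sums (2 / (1 - z)^3)"
proof -
  have nz: "1 - z \<noteq> 0"
    using assms by auto
  have "((\<lambda>w. inverse ((1 - w)^2)) has_field_derivative
      - (inverse ((1 - z)^2) * (of_nat 2 * (1 - z)^1 * (0 - 1)) * inverse ((1 - z)^2))) (at z)"
    by (rule derivative_eq_intros refl | use nz in simp)+
  also have "- (inverse ((1 - z)^2) * (of_nat 2 * (1 - z)^1 * (0 - 1)) * inverse ((1 - z)^2))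
      = 2 / (1 - z)^3"
  proof -
    have "- (inverse (u^2) * (of_nat 2 * u^1 * (0 - 1)) * inverse (u^2)) = 2 / u^3"
      if "u \<noteq> 0" for u :: 'a
      using that by (simp add: field_simps power2_eq_square power3_eq_cube)
    then show ?thesis
      using nz by blast
  qed
  finally have "((\<lambda>w. 1 / (1 - w)^2) has_field_derivative 2 / (1 - z)^3) (at z)"
    by (simp add: divide_inverse)
  with geometric_deriv_sums have "(\<lambda>n. diffs (\<lambda>n. of_nat (Suc n)) n * z ^ n) sums (2 / (1 - z)^3)"
    using assms by (rule termdiffs_sums_strong[where K = 1])
  then show ?thesis
    unfolding diffs_def by (simp add: algebra_simps)
qed

definition taylor_coeff :: "(complex \<Rightarrow> complex) \<Rightarrow> nat \<Rightarrow> complex" where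
  "taylor_coeff f n = (deriv ^^ n) f 0 / fact n"

lemma holomorphic_taylor_sums:
  assumes hol: "f holomorphic_on ball 0 1" and z: "norm z < 1"
  shows "(\<lambda>n. taylor_coeff f n * z ^ n) sums f z"
    and "(\<lambda>n. of_nat (Suc n) * taylor_coeff f (Suc n) * z ^ n) sums deriv f z"
proof -
  have zb: "z \<in> ball 0 1"
    using z by simp
  show "(\<lambda>n. taylor_coeff f n * z ^ n) sums f z"
    using holomorphic_power_series[OF hol zb] by (simp add: taylor_coeff_def)
  have "(deriv ^^ n) (deriv f) 0 / fact n = of_nat (Suc n) * taylor_coeff f (Suc n)" for n
  proof -
    have "(deriv ^^ n) (deriv f) = (deriv ^^ Suc n) f"
      by (simp only: funpow_Suc_right o_def)
    moreover have "(1 + of_nat n :: complex) \<noteq> 0"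
      by (metis of_nat_Suc of_nat_eq_0_iff nat.distinct(1))
    ultimately show ?thesis
      by (simp add: taylor_coeff_def divide_simps del: funpow.simps)
  qed
  then show "(\<lambda>n. of_nat (Suc n) * taylor_coeff f (Suc n) * z ^ n) sums deriv f z"
    using holomorphic_power_series[OF holomorphic_deriv[OF hol open_ball] zb] by simp
qed

lemma summable_norm_suminf_le_majorant:
  fixes h :: "nat \<Rightarrow> 'a::banach"
  assumes "g sums s" and "\<And>n. norm (h n) \<le> g n"
  shows "summable h" and "norm (suminf h) \<le> s"
proof -
  show "summable h"
    by (rule summable_comparison_test'[OF sums_summable[OF assms(1)]]) (rule assms(2))
  show "norm (suminf h) \<le> s"
    using norm_suminf_le[OF assms(2) sums_summable[OF assms(1)]] sums_unique[OF assms(1)] by simp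
qed

lemma tail_series_bounds:
  fixes a :: "nat \<Rightarrow> complex"
  assumes bnd: "\<And>n. n \<ge> 2 \<Longrightarrow> norm (a n) \<le> n" and z: "norm z < 1"
  shows "summable (\<lambda>n. a (n + 2) * z ^ (n + 1))"
    and "norm (\<Sum>n. a (n + 2) * z ^ (n + 1)) \<le> 1 / (1 - norm z)^2 - 1"
    and "summable (\<lambda>n. of_nat (n + 1) * a (n + 2) * z ^ (n + 1))"
    and "norm (\<Sum>n. of_nat (n + 1) * a (n + 2) * z ^ (n + 1)) \<le> 2 * norm z / (1 - norm z)^3"
proof -
  define r where "r = norm z"
  have "0 \<le> r" "r < 1"
    using z by (auto simp: r_def)
  have majA: "norm (a (n + 2) * z ^ (n + 1)) \<le> of_nat (n + 2) * r ^ (n + 1)" for n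
    using bnd[of "n + 2"] by (simp add: norm_mult norm_power r_def mult_right_mono)
  have majB: "norm (of_nat (n + 1) * a (n + 2) * z ^ (n + 1))
      \<le> of_nat ((n + 1) * (n + 2)) * r ^ (n + 1)" for n
  proof -
    have "norm (of_nat (n + 1) * a (n + 2) * z ^ (n + 1))
        = real (n + 1) * norm (a (n + 2) * z ^ (n + 1))"
      by (simp only: norm_mult norm_of_nat mult.assoc)
    also have "\<dots> \<le> real (n + 1) * (of_nat (n + 2) * r ^ (n + 1))"
      using majA by (rule mult_left_mono) simp
    also have "\<dots> = of_nat ((n + 1) * (n + 2)) * r ^ (n + 1)"
      by (simp only: of_nat_mult mult.assoc)
    finally show ?thesis .
  qed
  have sumsA: "(\<lambda>n. of_nat (n + 2) * r ^ (n + 1)) sums (1 / (1 - r)^2 - 1)"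
    using sums_shifted_geometric_deriv[of r] \<open>0 \<le> r\<close> \<open>r < 1\<close> by simp
  have sumsB: "(\<lambda>n. of_nat ((n + 1) * (n + 2)) * r ^ (n + 1)) sums (2 * r / (1 - r)^3)"
    using sums_mult[OF geometric_second_deriv_sums[of r], of r] \<open>0 \<le> r\<close> \<open>r < 1\<close>
    by (simp add: mult_ac)
  show "summable (\<lambda>n. a (n + 2) * z ^ (n + 1))"
    and "norm (\<Sum>n. a (n + 2) * z ^ (n + 1)) \<le> 1 / (1 - norm z)^2 - 1"
    using summable_norm_suminf_le_majorant[OF sumsA majA] by (simp_all add: r_def)
  show "summable (\<lambda>n. of_nat (n + 1) * a (n + 2) * z ^ (n + 1))"
    and "norm (\<Sum>n. of_nat (n + 1) * a (n + 2) * z ^ (n + 1)) \<le> 2 * norm z / (1 - norm z)^3"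
    using summable_norm_suminf_le_majorant[OF sumsB majB] by (simp_all add: r_def)
qed

lemma coeff_class_decomposition:
  assumes f: "f \<in> coeff_class" and z: "norm z < 1"
  obtains A B where "f z = z * (1 + A)" and "deriv f z = 1 + A + B"
    and "norm A \<le> 1 / (1 - norm z)^2 - 1" and "norm B \<le> 2 * norm z / (1 - norm z)^3"
proof -
  define a where "a = taylor_coeff f"
  have hol: "f holomorphic_on ball 0 1"
    and a0: "a 0 = 0" and a1: "a 1 = 1" and bnd: "\<And>n. n \<ge> 2 \<Longrightarrow> norm (a n) \<le> n"
    using f by (auto simp: coeff_class_def a_def taylor_coeff_def)
  define A where "A = (\<Sum>n. a (n + 2) * z ^ (n + 1))"
  define B where "B = (\<Sum>n. of_nat (n + 1) * a (n + 2) * z ^ (n + 1))"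
  note tail = tail_series_bounds[OF bnd z, folded A_def B_def]
  have "(\<lambda>n. a (Suc (Suc n)) * z ^ Suc (Suc n)) sums (f z - a 0 - a 1 * z)"
    using holomorphic_taylor_sums(1)[OF hol z]
    by (subst sums_Suc_iff, subst sums_Suc_iff) (simp add: a_def)
  moreover have "(\<lambda>n. a (Suc (Suc n)) * z ^ Suc (Suc n)) sums (z * A)"
    unfolding A_def using sums_mult[OF summable_sums[OF tail(1)], of z] by (simp add: mult_ac)
  ultimately have "f z = z * (1 + A)"
    using sums_unique2 a0 a1 by (fastforce simp: algebra_simps)
  moreover
  have "(\<lambda>n. of_nat (Suc (Suc n)) * a (Suc (Suc n)) * z ^ Suc n) sums (deriv f z - a 1)"
    using holomorphic_taylor_sums(2)[OF hol z] by (subst sums_Suc_iff) (simp add: a_def)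
  moreover have "(\<lambda>n. of_nat (Suc (Suc n)) * a (Suc (Suc n)) * z ^ Suc n) sums (A + B)"
    unfolding A_def B_def using sums_add[OF summable_sums[OF tail(1)] summable_sums[OF tail(3)]]
    by (simp add: algebra_simps)
  ultimately have "deriv f z = 1 + A + B"
    using sums_unique2 a1 by (fastforce simp: algebra_simps)
  with \<open>f z = z * (1 + A)\<close> show ?thesis
    using that tail(2,4) by blast
qed

lemma coeff_class_starq_bound:
  assumes f: "f \<in> coeff_class" and z: "0 < norm z" "norm z < 1"
    and small: "1 < 2 * (1 - norm z)^2"
  shows "f z \<noteq> 0"
    and "cmod (starq f z - 1) \<le> 2 * norm z / ((1 - norm z) * (2 * (1 - norm z)^2 - 1))"
proof -
  obtain A B where fz: "f z = z * (1 + A)" and dz: "deriv f z = 1 + A + B"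
    and normA: "norm A \<le> 1 / (1 - norm z)^2 - 1" and normB: "norm B \<le> 2 * norm z / (1 - norm z)^3"
    using coeff_class_decomposition[OF f z(2)] by blast
  define u where "u = 1 - norm z"
  have u: "0 < u"
    using z by (simp add: u_def)
  have "1 - norm A \<le> norm (1 + A)"
    using norm_triangle_ineq2[of 1 "- A"] by simp
  moreover have "1 - (1 / u^2 - 1) = (2 * u^2 - 1) / u^2"
    using u by (simp add: field_simps)
  ultimately have lower: "(2 * u^2 - 1) / u^2 \<le> norm (1 + A)"
    using normA by (simp add: u_def)
  moreover have "0 < (2 * u^2 - 1) / u^2"
    using small u by (simp add: u_def)
  ultimately have "1 + A \<noteq> 0"
    by auto
  then show "f z \<noteq> 0"
    using fz z by auto
  have "starq f z = (1 + A + B) / (1 + A)"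
    using z \<open>1 + A \<noteq> 0\<close> by (simp add: starq_def fz dz)
  then have "starq f z - 1 = B / (1 + A)"
    using \<open>1 + A \<noteq> 0\<close> by (simp add: field_simps)
  then have "cmod (starq f z - 1) = norm B / norm (1 + A)"
    by (simp add: norm_divide)
  also have "\<dots> \<le> (2 * norm z / u^3) / ((2 * u^2 - 1) / u^2)"
    using normB lower \<open>0 < (2 * u^2 - 1) / u^2\<close> by (intro frac_le) (use u in \<open>auto simp: u_def\<close>)
  also have "\<dots> = 2 * norm z / (u * (2 * u^2 - 1))"
    using u by (simp add: field_simps power2_eq_square power3_eq_cube)
  finally show "cmod (starq f z - 1) \<le> 2 * norm z / ((1 - norm z) * (2 * (1 - norm z)^2 - 1))"
    by (simp add: u_def)
qed

definition starlike_cubic :: "real \<Rightarrow> real \<Rightarrow> real" where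
  "starlike_cubic \<alpha> r = 2 * (1 - \<alpha>) * (1 - r)^3 - (1 - \<alpha> + (1 + \<alpha>) * r)"

lemma starlike_cubic_strict_antimono:
  fixes \<alpha> r r' :: real
  assumes "-1 < \<alpha>" "\<alpha> \<le> 1" "r < r'"
  shows "starlike_cubic \<alpha> r' < starlike_cubic \<alpha> r"
proof -
  have "(1 - r')^3 \<le> (1 - r)^3"
    using assms by (intro power_mono_odd) auto
  then have "2 * (1 - \<alpha>) * (1 - r')^3 \<le> 2 * (1 - \<alpha>) * (1 - r)^3"
    using assms by (intro mult_left_mono) auto
  moreover have "(1 + \<alpha>) * r < (1 + \<alpha>) * r'"
    using assms by (intro mult_strict_left_mono) auto
  ultimately show ?thesis
    by (simp add: starlike_cubic_def)
qed

lemma starlike_cubic_root_bounds: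
  fixes \<alpha> r :: real
  assumes \<alpha>: "-1 < \<alpha>" "\<alpha> < 1" and root: "2 * (1 - \<alpha>) * (1 - r)^3 = 1 - \<alpha> + (1 + \<alpha>) * r"
  shows "0 < r" and "r < 1"
proof -
  have "starlike_cubic \<alpha> r = 0"
    using root by (simp add: starlike_cubic_def)
  moreover have "0 < starlike_cubic \<alpha> 0" "starlike_cubic \<alpha> 1 < 0"
    using \<alpha> by (auto simp: starlike_cubic_def)
  ultimately have "r \<noteq> 0" "r \<noteq> 1"
    by auto
  moreover have "\<not> r < 0" "\<not> 1 < r"
    using starlike_cubic_strict_antimono[of \<alpha> r 0] starlike_cubic_strict_antimono[of \<alpha> 1 r]
      \<alpha> \<open>starlike_cubic \<alpha> r = 0\<close> \<open>0 < starlike_cubic \<alpha> 0\<close> \<open>starlike_cubic \<alpha> 1 < 0\<close>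
    by linarith+
  ultimately show "0 < r" "r < 1"
    by linarith+
qed

lemma ex1_starlike_cubic_root:
  fixes \<alpha> :: real
  assumes "-1 < \<alpha>" "\<alpha> < 1"
  shows "\<exists>!r. 0 < r \<and> r < 1 \<and> 2 * (1 - \<alpha>) * (1 - r)^3 = 1 - \<alpha> + (1 + \<alpha>) * r"
proof -
  have "\<exists>r\<ge>0. r \<le> 1 \<and> starlike_cubic \<alpha> r = 0"
    by (rule IVT2) (use assms in \<open>auto simp: starlike_cubic_def intro!: continuous_intros\<close>)
  then obtain r where "starlike_cubic \<alpha> r = 0"
    by blast
  then have root: "2 * (1 - \<alpha>) * (1 - r)^3 = 1 - \<alpha> + (1 + \<alpha>) * r"
    by (simp add: starlike_cubic_def)
  show ?thesis
  proof (rule ex1I[of _ r])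
    show "0 < r \<and> r < 1 \<and> 2 * (1 - \<alpha>) * (1 - r)^3 = 1 - \<alpha> + (1 + \<alpha>) * r"
      using starlike_cubic_root_bounds[OF assms root] root by simp
  next
    fix s assume "0 < s \<and> s < 1 \<and> 2 * (1 - \<alpha>) * (1 - s)^3 = 1 - \<alpha> + (1 + \<alpha>) * s"
    then have "starlike_cubic \<alpha> s = starlike_cubic \<alpha> r"
      using root by (simp add: starlike_cubic_def)
    then show "s = r"
      using starlike_cubic_strict_antimono[of \<alpha> r s] starlike_cubic_strict_antimono[of \<alpha> s r] assms
      by (cases r s rule: linorder_cases) auto
  qed
qed

lemma starlike_cubic_pos_imp_bound:
  fixes \<alpha> r :: real
  assumes "-1 < \<alpha>" "\<alpha> < 1" "0 \<le> r" "r < 1" and pos: "0 < starlike_cubic \<alpha> r"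
  shows "1 < 2 * (1 - r)^2" and "2 * r / ((1 - r) * (2 * (1 - r)^2 - 1)) < 1 - \<alpha>"
proof -
  define u where "u = 1 - r"
  have u: "0 < u" "u \<le> 1"
    using assms by (auto simp: u_def)
  have g: "1 - \<alpha> + (1 + \<alpha>) * r < 2 * (1 - \<alpha>) * u^3"
    using pos by (simp add: starlike_cubic_def u_def)
  moreover have "0 \<le> (1 + \<alpha>) * r"
    using assms by simp
  ultimately have "(1 - \<alpha>) * 1 < (1 - \<alpha>) * (2 * u^3)"
    by (simp add: algebra_simps)
  then have "1 < 2 * u^3"
    using assms by (metis diff_gt_0_iff_gt mult_less_cancel_left_pos)
  moreover have "u^3 \<le> u^2"
    using u by (simp add: power_decreasing)
  ultimately have "1 < 2 * u^2"
    by linarith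
  then show "1 < 2 * (1 - r)^2"
    by (simp only: u_def)
  have "(1 - \<alpha>) * (u * (2 * u^2 - 1)) = 2 * (1 - \<alpha>) * u^3 - (1 - \<alpha>) * u"
    by (simp add: algebra_simps power2_eq_square power3_eq_cube)
  moreover have "(1 - \<alpha>) * u + 2 * r = 1 - \<alpha> + (1 + \<alpha>) * r"
    by (simp add: u_def algebra_simps)
  ultimately have "2 * r < (1 - \<alpha>) * (u * (2 * u^2 - 1))"
    using g by linarith
  moreover have "0 < u * (2 * u^2 - 1)"
    using u \<open>1 < 2 * u^2\<close> by simp
  ultimately have "2 * r / (u * (2 * u^2 - 1)) < 1 - \<alpha>"
    by (simp add: pos_divide_less_eq mult.commute)
  then show "2 * r / ((1 - r) * (2 * (1 - r)^2 - 1)) < 1 - \<alpha>"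
    by (simp only: u_def)
qed

definition extremal_fun :: "complex \<Rightarrow> complex" where
  "extremal_fun z = 2 * z - z / (1 - z)^2"

definition extremal_coeff :: "nat \<Rightarrow> complex" where
  "extremal_coeff n = (if n = 1 then 1 else - of_nat n)"

lemma extremal_fun_sums:
  assumes "norm z < 1"
  shows "(\<lambda>n. extremal_coeff n * z ^ n) sums extremal_fun z"
proof -
  have "(\<lambda>n. z * (of_nat (Suc n) * z ^ n)) sums (z * (1 / (1 - z)^2))"
    by (rule sums_mult[OF geometric_deriv_sums[OF assms]])
  then have "(\<lambda>n. of_nat (Suc n) * z ^ Suc n) sums (z / (1 - z)^2)"
    by (simp add: mult_ac)
  then have "(\<lambda>n. of_nat n * z ^ n) sums (z / (1 - z)^2)"
    by (subst (asm) sums_Suc_iff) simp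
  from sums_diff[OF sums_single[of 1 "\<lambda>n. 2 * z ^ n"] this]
  have "(\<lambda>n. (if n = 1 then 2 * z ^ n else 0) - of_nat n * z ^ n) sums extremal_fun z"
    by (simp add: extremal_fun_def)
  moreover have "(\<lambda>n. (if n = 1 then 2 * z ^ n else 0) - of_nat n * z ^ n)
      = (\<lambda>n. extremal_coeff n * z ^ n)"
    by (auto simp: extremal_coeff_def)
  ultimately show ?thesis
    by simp
qed

lemma extremal_fun_fps_expansion: "extremal_fun has_fps_expansion Abs_fps extremal_coeff"
  unfolding has_fps_expansion_def
proof
  have "summable (\<lambda>n. extremal_coeff n * (1/2) ^ n)"
    using extremal_fun_sums[of "1/2"] by (auto dest: sums_summable)
  then have "norm (1/2 :: complex) \<le> conv_radius extremal_coeff"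
    by (rule conv_radius_geI)
  then show "0 < fps_conv_radius (Abs_fps extremal_coeff)"
    unfolding fps_conv_radius_def by (auto elim!: less_le_trans[rotated])
  have "eventually (\<lambda>z. z \<in> ball (0::complex) 1) (nhds 0)"
    by (rule eventually_nhds_in_open) auto
  then show "eventually (\<lambda>z. eval_fps (Abs_fps extremal_coeff) z = extremal_fun z) (nhds 0)"
    by eventually_elim (use extremal_fun_sums in \<open>auto simp: eval_fps_def sums_iff\<close>)
qed

lemma taylor_coeff_extremal_fun: "taylor_coeff extremal_fun n = extremal_coeff n"
  using fps_nth_fps_expansion[OF extremal_fun_fps_expansion, of n] by (simp add: taylor_coeff_def)

lemma extremal_fun_in_coeff_class: "extremal_fun \<in> coeff_class"
proof -
  have "extremal_fun holomorphic_on ball 0 1"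
    unfolding extremal_fun_def[abs_def] by (intro holomorphic_intros) (auto simp: dist_norm)
  moreover have "deriv extremal_fun 0 = 1"
    using taylor_coeff_extremal_fun[of 1] by (simp add: taylor_coeff_def extremal_coeff_def)
  moreover have "cmod ((deriv ^^ n) extremal_fun 0 / of_nat (fact n)) \<le> real n" if "n \<ge> 2" for n
    using taylor_coeff_extremal_fun[of n] that by (simp add: taylor_coeff_def extremal_coeff_def)
  ultimately show ?thesis
    by (simp add: coeff_class_def extremal_fun_def)
qed

lemma deriv_extremal_fun:
  assumes "z \<noteq> 1"
  shows "deriv extremal_fun z = 2 - (1 + z) / (1 - z)^3"
proof -
  have nz: "1 - z \<noteq> 0"
    using assms by simp
  have "(extremal_fun has_field_derivative
      2 * 1 - (1 * (1 - z)^2 - z * (of_nat 2 * (1 - z)^1 * (0 - 1))) / ((1 - z)^2 * (1 - z)^2)) (at z)"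
    unfolding extremal_fun_def[abs_def] by (rule derivative_eq_intros refl | use nz in simp)+
  also have "2 * 1 - (1 * (1 - z)^2 - z * (of_nat 2 * (1 - z)^1 * (0 - 1))) / ((1 - z)^2 * (1 - z)^2)
      = 2 - (1 + z) / (1 - z)^3"
    using nz by (simp add: divide_simps, algebra)
  finally show ?thesis
    by (rule DERIV_imp_deriv)
qed

lemma Re_starq_extremal_fun_at_root:
  fixes \<alpha> t :: real
  assumes "0 \<le> \<alpha>" and t: "0 < t" "t < 1"
    and root: "2 * (1 - \<alpha>) * (1 - t)^3 = 1 - \<alpha> + (1 + \<alpha>) * t"
  shows "Re (starq extremal_fun t) \<le> \<alpha>"
proof -
  define D where "D = 2 - (1 + t) / (1 - t)^3"
  define F where "F = 2 * t - t / (1 - t)^2"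
  have "complex_of_real t \<noteq> 1"
    using t by (metis of_real_1 of_real_eq_iff less_irrefl)
  then have starq: "starq extremal_fun t = of_real (t * D / F)"
    using t by (simp add: starq_def deriv_extremal_fun extremal_fun_def D_def F_def)
  have "t * D - \<alpha> * F = t / (1 - t)^3 * (2 * (1 - \<alpha>) * (1 - t)^3 - (1 - \<alpha> + (1 + \<alpha>) * t))"
    using t by (simp add: D_def F_def divide_simps, algebra)
  then have "t * D = \<alpha> * F"
    using root by simp
  with starq show ?thesis
    using \<open>0 \<le> \<alpha>\<close> by (cases "F = 0") auto
qed

lemma coeff_class_starq_within_root:
  fixes \<alpha> r :: real
  assumes \<alpha>: "-1 < \<alpha>" "\<alpha> < 1" and root: "2 * (1 - \<alpha>) * (1 - r)^3 = 1 - \<alpha> + (1 + \<alpha>) * r"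
    and f: "f \<in> coeff_class" and z: "cmod z < r"
  shows "z \<noteq> 0 \<Longrightarrow> f z \<noteq> 0" and "cmod (starq f z - 1) < 1 - \<alpha>"
proof -
  have "r < 1"
    using starlike_cubic_root_bounds[OF \<alpha> root] by simp
  have "starlike_cubic \<alpha> r = 0"
    using root by (simp add: starlike_cubic_def)
  then have "0 < starlike_cubic \<alpha> (cmod z)"
    using starlike_cubic_strict_antimono[of \<alpha> "cmod z" r] \<alpha> z by simp
  note bound = starlike_cubic_pos_imp_bound[OF \<alpha> norm_ge_zero _ this]
  show "f z \<noteq> 0" if "z \<noteq> 0"
    using coeff_class_starq_bound(1)[OF f _ _ bound(1)] that z \<open>r < 1\<close> by simp
  show "cmod (starq f z - 1) < 1 - \<alpha>"
  proof (cases "z = 0")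
    case True
    then show ?thesis
      using \<alpha> by (simp add: starq_def)
  next
    case False
    then show ?thesis
      using coeff_class_starq_bound(2)[OF f _ _ bound(1)] bound(2) z \<open>r < 1\<close> by fastforce
  qed
qed

lemma Re_ge_1_minus_cmod: "1 - cmod (w - 1) \<le> Re w"
  using abs_Re_le_cmod[of "w - 1"] by simp

lemma radius_starlike_order_coeff_class:
  fixes \<alpha> r :: real
  assumes \<alpha>: "0 \<le> \<alpha>" "\<alpha> < 1" and root: "2 * (1 - \<alpha>) * (1 - r)^3 = 1 - \<alpha> + (1 + \<alpha>) * r"
  shows "radius_starlike_order coeff_class \<alpha> = r"
  unfolding radius_starlike_order_def
proof (rule cSup_eq_maximum)
  have \<alpha>': "-1 < \<alpha>" "\<alpha> < 1"
    using \<alpha> by auto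
  note r = starlike_cubic_root_bounds[OF \<alpha>' root]
  note within = coeff_class_starq_within_root[OF \<alpha>' root]
  have "\<forall>f\<in>coeff_class.
      (\<forall>z. 0 < cmod z \<and> cmod z < r \<longrightarrow> f z \<noteq> 0) \<and> (\<forall>z. cmod z < r \<longrightarrow> \<alpha> < Re (starq f z))"
  proof (intro ballI allI impI conjI)
    fix f z
    assume "f \<in> coeff_class" "0 < cmod z \<and> cmod z < r"
    then show "f z \<noteq> 0"
      using within(1) by auto
  next
    fix f z
    assume "f \<in> coeff_class" "cmod z < r"
    then have "cmod (starq f z - 1) < 1 - \<alpha>"
      by (rule within(2))
    then show "\<alpha> < Re (starq f z)"
      using Re_ge_1_minus_cmod[of "starq f z"] by linarith
  qed
  then show "r \<in> {r. 0 < r \<and> r \<le> 1 \<and> (\<forall>f\<in>coeff_class.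
      (\<forall>z. 0 < cmod z \<and> cmod z < r \<longrightarrow> f z \<noteq> 0) \<and> (\<forall>z. cmod z < r \<longrightarrow> \<alpha> < Re (starq f z)))}"
    using r by simp
  fix x
  assume "x \<in> {r. 0 < r \<and> r \<le> 1 \<and> (\<forall>f\<in>coeff_class.
      (\<forall>z. 0 < cmod z \<and> cmod z < r \<longrightarrow> f z \<noteq> 0) \<and> (\<forall>z. cmod z < r \<longrightarrow> \<alpha> < Re (starq f z)))}"
  then have extremal: "\<alpha> < Re (starq extremal_fun z)" if "cmod z < x" for z
    using extremal_fun_in_coeff_class that by blast
  show "x \<le> r"
  proof (rule ccontr)
    assume "\<not> x \<le> r"
    then have "\<alpha> < Re (starq extremal_fun (of_real r))"
      using extremal[of "of_real r"] r by simp
    then show False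
      using Re_starq_extremal_fun_at_root[OF \<alpha>(1) r root] by simp
  qed
qed

lemma radius_parabolic_coeff_class:
  fixes r :: real
  assumes root: "2 * (1 - 1/2) * (1 - r)^3 = 1 - 1/2 + (1 + 1/2) * r"
  shows "radius_parabolic coeff_class = r"
  unfolding radius_parabolic_def
proof (rule cSup_eq_maximum)
  have half: "-1 < (1/2 :: real)" "(1/2 :: real) < 1"
    by auto
  note r = starlike_cubic_root_bounds[OF half root]
  have "\<forall>f\<in>coeff_class. \<forall>z. cmod z < r \<longrightarrow> cmod (starq f z - 1) < Re (starq f z)"
  proof (intro ballI allI impI)
    fix f z
    assume "f \<in> coeff_class" "cmod z < r"
    then have "cmod (starq f z - 1) < 1/2"
      using coeff_class_starq_within_root(2)[OF half root] by fastforce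
    then show "cmod (starq f z - 1) < Re (starq f z)"
      using Re_ge_1_minus_cmod[of "starq f z"] by linarith
  qed
  then show "r \<in> {r. 0 < r \<and> r \<le> 1 \<and>
      (\<forall>f\<in>coeff_class. \<forall>z. cmod z < r \<longrightarrow> cmod (starq f z - 1) < Re (starq f z))}"
    using r by simp
  fix x
  assume "x \<in> {r. 0 < r \<and> r \<le> 1 \<and>
      (\<forall>f\<in>coeff_class. \<forall>z. cmod z < r \<longrightarrow> cmod (starq f z - 1) < Re (starq f z))}"
  then have extremal: "cmod (starq extremal_fun z - 1) < Re (starq extremal_fun z)" if "cmod z < x" for z
    using extremal_fun_in_coeff_class that by blast
  show "x \<le> r"
  proof (rule ccontr)
    assume "\<not> x \<le> r"
    then have "cmod (starq extremal_fun (of_real r) - 1) < Re (starq extremal_fun (of_real r))"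
      using extremal[of "of_real r"] r by simp
    moreover have "Re (starq extremal_fun (of_real r)) \<le> 1/2"
      using Re_starq_extremal_fun_at_root[OF _ r root] by simp
    ultimately show False
      using Re_ge_1_minus_cmod[of "starq extremal_fun (of_real r)"] by linarith
  qed
qed

lemma cube_root_difference_cubic:
  fixes q m :: real
  defines "y \<equiv> root 3 (q + m) - root 3 (q - m)"
  shows "y^3 + 3 * root 3 (q^2 - m^2) * y = 2 * m"
proof -
  define a b where "a = root 3 (q - m)" and "b = root 3 (q + m)"
  have "a * b = root 3 (q^2 - m^2)"
    by (simp add: a_def b_def real_root_mult[symmetric] algebra_simps power2_eq_square)
  moreover have "a^3 = q - m" "b^3 = q + m"
    by (simp_all add: a_def b_def odd_real_root_pow)
  moreover have "(b - a)^3 + 3 * (a * b) * (b - a) = b^3 - a^3"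
    by (simp add: power3_eq_cube algebra_simps)
  ultimately show ?thesis
    by (simp add: y_def a_def b_def)
qed

lemma starlike_cubic_root_order_0:
  defines "x \<equiv> 1 + (1 / 6 powr (2/3)) * (root 3 (sqrt 330 - 18) - root 3 (sqrt 330 + 18))"
  shows "2 * (1 - 0) * (1 - x)^3 = 1 - 0 + (1 + 0) * (x::real)"
proof -
  define y where "y = root 3 (sqrt 330 + 18) - root 3 (sqrt 330 - 18)"
  define t where "t = root 3 (6::real)"
  define s where "s = 1 - x"
  have cubic: "y^3 + 3 * t * y = 36"
    using cube_root_difference_cubic[of "sqrt 330" 18] by (simp add: y_def t_def)
  have t: "t^3 = 6" "0 < t"
    by (simp_all add: t_def odd_real_root_pow)
  have "6 powr (2/3) = t^2"
    by (simp add: t_def root_powr_inverse powr_power)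
  then have "s = y / t^2"
    by (simp add: s_def x_def y_def diff_divide_distrib)
  also have "\<dots> = t * y / 6"
    using t by (simp add: field_simps power2_eq_square power3_eq_cube)
  finally have "t * y = 6 * s"
    by simp
  moreover from this have "s^3 = t^3 * y^3 / 216"
    by (simp add: power_mult_distrib[symmetric])
  ultimately have "s^3 = 1 - s / 2"
    using t cubic by simp
  moreover have "x = 1 - s"
    by (simp add: s_def)
  ultimately show ?thesis
    by simp
qed

lemma starlike_cubic_root_order_half:
  defines "x \<equiv> 1 + (1 / sqrt 2) * (root 3 (3 - 2 * sqrt 2) - root 3 (3 + 2 * sqrt 2))"
  shows "2 * (1 - 1/2) * (1 - x)^3 = 1 - 1/2 + (1 + 1/2) * (x::real)"
proof -
  define y where "y = root 3 (3 + 2 * sqrt 2) - root 3 (3 - 2 * sqrt 2)"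
  define s where "s = 1 - x"
  have "y^3 + 3 * y = 4 * sqrt 2"
    using cube_root_difference_cubic[of 3 "2 * sqrt 2"] by (simp add: y_def power_mult_distrib)
  moreover have "y = sqrt 2 * s"
    by (simp add: x_def y_def s_def)
  moreover have "sqrt 2 ^ 3 = 2 * sqrt (2::real)"
    by (simp add: power3_eq_cube)
  ultimately have "sqrt 2 * (2 * s^3 + 3 * s) = sqrt 2 * 4"
    by (simp add: power_mult_distrib algebra_simps)
  then have "2 * s^3 + 3 * s = 4"
    by simp
  moreover have x: "x = 1 - s"
    by (simp add: s_def)
  ultimately show ?thesis
    unfolding x by (simp add: field_simps)
qed

theorem corollary2p2:
  shows "(\<forall>\<alpha>::real. 0 \<le> \<alpha> \<and> \<alpha> < 1 \<longrightarrow>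
            (\<exists>!r. 0 < r \<and> r < 1 \<and> 2 * (1 - \<alpha>) * (1 - r) ^ 3 = 1 - \<alpha> + (1 + \<alpha>) * r) \<and>
            radius_starlike_order coeff_class \<alpha> =
              (THE r. 0 < r \<and> r < 1 \<and> 2 * (1 - \<alpha>) * (1 - r) ^ 3 = 1 - \<alpha> + (1 + \<alpha>) * r))
       \<and> radius_starlike_order coeff_class 0 =
           1 + (1 / 6 powr (2/3)) * (root 3 (sqrt 330 - 18) - root 3 (sqrt 330 + 18))
       \<and> radius_starlike_order coeff_class (1/2) =
           1 + (1 / sqrt 2) * (root 3 (3 - 2 * sqrt 2) - root 3 (3 + 2 * sqrt 2))
       \<and> radius_parabolic coeff_class = radius_starlike_order coeff_class (1/2)"
proof (intro conjI allI impI)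
  fix \<alpha> :: real
  assume "0 \<le> \<alpha> \<and> \<alpha> < 1"
  then have \<alpha>: "0 \<le> \<alpha>" "-1 < \<alpha>" "\<alpha> < 1"
    by auto
  show ex1: "\<exists>!r. 0 < r \<and> r < 1 \<and> 2 * (1 - \<alpha>) * (1 - r) ^ 3 = 1 - \<alpha> + (1 + \<alpha>) * r"
    using ex1_starlike_cubic_root[OF \<alpha>(2,3)] .
  show "radius_starlike_order coeff_class \<alpha> =
      (THE r. 0 < r \<and> r < 1 \<and> 2 * (1 - \<alpha>) * (1 - r) ^ 3 = 1 - \<alpha> + (1 + \<alpha>) * r)"
    using theI'[OF ex1] by (intro radius_starlike_order_coeff_class[OF \<alpha>(1,3)]) simp
next
  show "radius_starlike_order coeff_class 0 =
      1 + (1 / 6 powr (2/3)) * (root 3 (sqrt 330 - 18) - root 3 (sqrt 330 + 18))"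
    by (rule radius_starlike_order_coeff_class[OF _ _ starlike_cubic_root_order_0]) simp_all
  show half: "radius_starlike_order coeff_class (1/2) =
      1 + (1 / sqrt 2) * (root 3 (3 - 2 * sqrt 2) - root 3 (3 + 2 * sqrt 2))"
    by (rule radius_starlike_order_coeff_class[OF _ _ starlike_cubic_root_order_half]) simp_all
  show "radius_parabolic coeff_class = radius_starlike_order coeff_class (1/2)"
    unfolding half by (rule radius_parabolic_coeff_class[OF starlike_cubic_root_order_half])
qed

end
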